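(* Every block graph is hereditarily connected-domishold. Every trivially perfect graph is hereditarily connected-domishold.
   Context: A block graph is a graph in which every block (maximal connected subgraph without a cut vertex) is a complete graph. A trivially perfect graph is a graph with no induced subgraph isomorphic to $P_4$ or $C_4$. A connected dominating set of a connected graph $G$ is a set $S\subseteq V(G)$ such that every vertex outside $S$ has a neighbor in $S$ and $G[S]$ is connected; $G$ is connected-domishold if there exist $w:V(G)\to\mathbb{R}_{\ge0}$, $t\in\mathbb{R}_{\ge0}$ with $\sum_{x\in S}w(x)\ge t$ iff $S$ is a connected dominating set, for all $S\subseteq V(G)$; disconnected graphs are connected-domishold by convention. $G$ is hereditarily connected-domishold if all its induced subgraphs are connected-domishold. *)

theory Defs
  imports Complex_Main
begin

text \<open>A finite simple graph is given by a finite vertex set V and a symmetric,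
  irreflexive adjacency relation E on the ambient type; only edges between
  vertices of V matter. The induced subgraph G[S] for S \<subseteq> V is (S, E).\<close>

definition simple_graph :: "'a set \<Rightarrow> ('a \<Rightarrow> 'a \<Rightarrow> bool) \<Rightarrow> bool" where
  "simple_graph V E \<longleftrightarrow> finite V \<and> (\<forall>x y. E x y \<longrightarrow> E y x) \<and> (\<forall>x. \<not> E x x)"

definition connected_on :: "('a \<Rightarrow> 'a \<Rightarrow> bool) \<Rightarrow> 'a set \<Rightarrow> bool" where
  "connected_on E S \<longleftrightarrow> S \<noteq> {} \<and>
     (\<forall>x\<in>S. \<forall>y\<in>S. (\<lambda>u v. E u v \<and> u \<in> S \<and> v \<in> S)\<^sup>*\<^sup>* x y)"

definition is_clique :: "('a \<Rightarrow> 'a \<Rightarrow> bool) \<Rightarrow> 'a set \<Rightarrow> bool" where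
  "is_clique E S \<longleftrightarrow> (\<forall>x\<in>S. \<forall>y\<in>S. x \<noteq> y \<longrightarrow> E x y)"

definition no_cut_vertex :: "('a \<Rightarrow> 'a \<Rightarrow> bool) \<Rightarrow> 'a set \<Rightarrow> bool" where
  "no_cut_vertex E B \<longleftrightarrow> (\<forall>v\<in>B. B - {v} \<noteq> {} \<longrightarrow> connected_on E (B - {v}))"

definition is_block :: "'a set \<Rightarrow> ('a \<Rightarrow> 'a \<Rightarrow> bool) \<Rightarrow> 'a set \<Rightarrow> bool" where
  "is_block V E B \<longleftrightarrow> B \<subseteq> V \<and> connected_on E B \<and> no_cut_vertex E B \<and>
     (\<forall>B'. B \<subset> B' \<and> B' \<subseteq> V \<longrightarrow> \<not> (connected_on E B' \<and> no_cut_vertex E B'))"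

definition block_graph :: "'a set \<Rightarrow> ('a \<Rightarrow> 'a \<Rightarrow> bool) \<Rightarrow> bool" where
  "block_graph V E \<longleftrightarrow> (\<forall>B. is_block V E B \<longrightarrow> is_clique E B)"

text \<open>No induced P4 and no induced C4.\<close>
definition trivially_perfect :: "'a set \<Rightarrow> ('a \<Rightarrow> 'a \<Rightarrow> bool) \<Rightarrow> bool" where
  "trivially_perfect V E \<longleftrightarrow>
     \<not> (\<exists>a\<in>V. \<exists>b\<in>V. \<exists>c\<in>V. \<exists>d\<in>V. distinct [a,b,c,d] \<and>
          E a b \<and> E b c \<and> E c d \<and> \<not> E a c \<and> \<not> E b d \<and> \<not> E a d) \<and>
     \<not> (\<exists>a\<in>V. \<exists>b\<in>V. \<exists>c\<in>V. \<exists>d\<in>V. distinct [a,b,c,d] \<and>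
          E a b \<and> E b c \<and> E c d \<and> E d a \<and> \<not> E a c \<and> \<not> E b d)"

definition connected_dominating_set :: "'a set \<Rightarrow> ('a \<Rightarrow> 'a \<Rightarrow> bool) \<Rightarrow> 'a set \<Rightarrow> bool" where
  "connected_dominating_set V E S \<longleftrightarrow> S \<subseteq> V \<and>
     (\<forall>x\<in>V - S. \<exists>y\<in>S. E x y) \<and> connected_on E S"

definition connected_domishold :: "'a set \<Rightarrow> ('a \<Rightarrow> 'a \<Rightarrow> bool) \<Rightarrow> bool" where
  "connected_domishold V E \<longleftrightarrow> \<not> connected_on E V \<or>
     (\<exists>(w :: 'a \<Rightarrow> real) (t :: real). (\<forall>x\<in>V. w x \<ge> 0) \<and> t \<ge> 0 \<and>
        (\<forall>S. S \<subseteq> V \<longrightarrow> ((\<Sum>x\<in>S. w x) \<ge> t \<longleftrightarrow> connected_dominating_set V E S)))"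

definition hereditarily_connected_domishold :: "'a set \<Rightarrow> ('a \<Rightarrow> 'a \<Rightarrow> bool) \<Rightarrow> bool" where
  "hereditarily_connected_domishold V E \<longleftrightarrow> (\<forall>S. S \<subseteq> V \<longrightarrow> connected_domishold S E)"

end

theory Submission
  imports Defs
begin

text \<open>If every biconnected induced subgraph is a clique, every inner vertex of a shortest path is a
  cut vertex; hence the connected dominating sets of a connected such graph are exactly the
  nonempty sets containing all cut vertices.
  In a trivially perfect graph, a vertex t of a connected dominating set whose closed
  neighbourhood N[t] is inclusion-maximal is universal: otherwise the set leaves N[t] through a
  neighbour a of t, and excluding induced P4 and C4 forces N[t] \<subset> N[a]. Hence the connected
  dominating sets are the sets containing a universal vertex.\<close>

section \<open>Walks and connectivity\<close>

definition induced :: "('a \<Rightarrow> 'a \<Rightarrow> bool) \<Rightarrow> 'a set \<Rightarrow> 'a \<Rightarrow> 'a \<Rightarrow> bool" where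
  "induced E A = (\<lambda>u v. E u v \<and> u \<in> A \<and> v \<in> A)"

lemma connected_on_iff:
  "connected_on E S \<longleftrightarrow> S \<noteq> {} \<and> (\<forall>x\<in>S. \<forall>y\<in>S. (induced E S)\<^sup>*\<^sup>* x y)"
  unfolding connected_on_def induced_def by simp

lemma induced_rtranclp_sym:
  assumes "symp E" "(induced E A)\<^sup>*\<^sup>* x y"
  shows "(induced E A)\<^sup>*\<^sup>* y x"
proof -
  have "symp (induced E A)"
    using assms(1) unfolding induced_def symp_def by blast
  then show ?thesis
    using assms(2) by (metis sympD symp_rtranclp)
qed

lemma induced_rtranclp_mono:
  assumes "A \<subseteq> B" "(induced E A)\<^sup>*\<^sup>* x y"
  shows "(induced E B)\<^sup>*\<^sup>* x y"
  using assms(2) by (rule rtranclp_mono[THEN predicate2D, rotated])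
    (use assms(1) in \<open>auto simp: induced_def\<close>)

lemma induced_rtranclp_step:
  "E u v \<Longrightarrow> u \<in> A \<Longrightarrow> v \<in> A \<Longrightarrow> (induced E A)\<^sup>*\<^sup>* v y \<Longrightarrow> (induced E A)\<^sup>*\<^sup>* u y"
  by (simp add: induced_def converse_rtranclp_into_rtranclp)

lemma connected_onI_root:
  assumes "symp E" "c \<in> B" "\<And>y. y \<in> B \<Longrightarrow> (induced E B)\<^sup>*\<^sup>* c y"
  shows "connected_on E B"
  unfolding connected_on_iff using assms
  by (metis induced_rtranclp_sym empty_iff rtranclp_trans)

lemma in_set_hd_last_or_inner:
  assumes "x \<in> set xs"
  shows "x = hd xs \<or> x = last xs \<or> (\<exists>i. 0 < i \<and> Suc i < length xs \<and> x = xs!i)"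
proof -
  obtain k where k: "k < length xs" "x = xs!k"
    using assms by (auto simp: in_set_conv_nth)
  moreover have "xs \<noteq> []"
    using assms by auto
  ultimately show ?thesis
    by (cases "k = 0"; cases "k = length xs - 1") (auto simp: hd_conv_nth last_conv_nth)
qed

fun walk :: "('a \<Rightarrow> 'a \<Rightarrow> bool) \<Rightarrow> 'a set \<Rightarrow> 'a list \<Rightarrow> bool" where
  "walk E A [] = False"
| "walk E A [x] = (x \<in> A)"
| "walk E A (x # y # xs) = (x \<in> A \<and> E x y \<and> walk E A (y # xs))"

lemma walk_not_Nil: "walk E A xs \<Longrightarrow> xs \<noteq> []"
  by auto

lemma walk_set: "walk E A xs \<Longrightarrow> set xs \<subseteq> A"
  by (induction E A xs rule: walk.induct) auto

lemma walk_append: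
  "xs \<noteq> [] \<Longrightarrow> ys \<noteq> [] \<Longrightarrow>
    walk E A (xs @ ys) \<longleftrightarrow> walk E A xs \<and> walk E A ys \<and> E (last xs) (hd ys)"
proof (induction xs)
  case (Cons x xs)
  then show ?case
    by (cases xs; cases ys) auto
qed simp

lemma walk_rev: "symp E \<Longrightarrow> walk E A xs \<Longrightarrow> walk E A (rev xs)"
proof (induction E A xs rule: walk.induct)
  case (3 E A x y xs)
  then show ?case
    using walk_append[of "rev xs @ [y]" "[x]" E A] by (auto dest: sympD)
qed auto

lemma walk_nth: "walk E A xs \<Longrightarrow> Suc i < length xs \<Longrightarrow> E (xs!i) (xs!Suc i)"
proof (induction E A xs arbitrary: i rule: walk.induct)
  case (3 E A x y xs)
  then show ?case by (cases i) auto
qed auto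

lemma rtranclp_induced_imp_walk:
  assumes "(induced E A)\<^sup>*\<^sup>* x y" "y \<in> A"
  shows "\<exists>xs. walk E A xs \<and> hd xs = x \<and> last xs = y"
  using assms(1)
proof (induction rule: converse_rtranclp_induct)
  case base
  then show ?case
    using assms(2) by (intro exI[of _ "[y]"]) auto
next
  case (step x z)
  then obtain zs where zs: "walk E A zs" "hd zs = z" "last zs = y"
    by blast
  then have "walk E A (x # zs)"
    using step(1) unfolding induced_def by (cases zs) auto
  then show ?case
    using zs by (intro exI[of _ "x # zs"]) (auto elim: walk.elims)
qed

lemma walk_imp_rtranclp_induced:
  "walk E A xs \<Longrightarrow> y \<in> set xs \<Longrightarrow> (induced E (set xs))\<^sup>*\<^sup>* (hd xs) y"
proof (induction E A xs rule: walk.induct)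
  case (3 E A x z xs)
  show ?case
  proof (cases "y = x")
    case False
    then have "(induced E (set (z # xs)))\<^sup>*\<^sup>* z y"
      using 3 by auto
    then have "(induced E (set (x # z # xs)))\<^sup>*\<^sup>* z y"
      by (rule induced_rtranclp_mono[rotated]) auto
    then show ?thesis
      using 3 by (auto intro: induced_rtranclp_step)
  qed simp
qed auto

lemma walk_reaches_from_neighbour:
  assumes "walk E A P" "E v (hd P)" "y \<in> set P"
  shows "(induced E (insert v (set P)))\<^sup>*\<^sup>* v y"
proof -
  have "P \<noteq> []"
    using assms(1) by auto
  moreover have "(induced E (insert v (set P)))\<^sup>*\<^sup>* (hd P) y"
    using walk_imp_rtranclp_induced[OF assms(1,3)] by (rule induced_rtranclp_mono[rotated]) auto
  ultimately show ?thesis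
    using assms(2) by (auto intro: induced_rtranclp_step)
qed

lemma walk_take: "walk E A xs \<Longrightarrow> 0 < k \<Longrightarrow> walk E A (take k xs)"
  using walk_append[of "take k xs" "drop k xs" E A] walk_not_Nil[of E A xs]
  by (cases "k < length xs") auto

lemma walk_drop: "walk E A xs \<Longrightarrow> k < length xs \<Longrightarrow> walk E A (drop k xs)"
  using walk_append[of "take k xs" "drop k xs" E A] walk_not_Nil[of E A xs]
  by (cases "k = 0") auto

lemma walk_splice:
  assumes "walk E A xs" "i < length xs" "j < length xs" "E (xs!i) (xs!j)"
  shows "walk E A (take (Suc i) xs @ drop j xs)"
proof -
  have "last (take (Suc i) xs) = xs!i"
    using assms(2) by (simp add: last_conv_nth take_Suc_conv_app_nth)
  then show ?thesis
    using assms walk_append[of "take (Suc i) xs" "drop j xs" E A] walk_not_Nil[OF assms(1)]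
    by (auto simp: walk_take walk_drop hd_drop_conv_nth)
qed

definition shortest_walk :: "('a \<Rightarrow> 'a \<Rightarrow> bool) \<Rightarrow> 'a set \<Rightarrow> 'a list \<Rightarrow> bool" where
  "shortest_walk E A xs \<longleftrightarrow> walk E A xs \<and>
     (\<forall>ys. walk E A ys \<and> hd ys = hd xs \<and> last ys = last xs \<longrightarrow> length xs \<le> length ys)"

lemma shortest_walk_exists:
  assumes "(induced E A)\<^sup>*\<^sup>* x y" "y \<in> A"
  obtains xs where "shortest_walk E A xs" "hd xs = x" "last xs = y"
proof -
  let ?P = "\<lambda>xs. walk E A xs \<and> hd xs = x \<and> last xs = y"
  obtain xs0 where "?P xs0"
    using rtranclp_induced_imp_walk[OF assms] by blast
  then obtain xs where "?P xs" "\<And>ys. ?P ys \<Longrightarrow> length xs \<le> length ys"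
    using ex_has_least_nat[of ?P xs0 length] by blast
  then show ?thesis
    using that unfolding shortest_walk_def by blast
qed

lemma shortest_walk_shortcut:
  assumes "shortest_walk E A xs" "i < j" "j < length xs"
    and "walk E A (take (Suc i) xs @ drop j xs)"
  shows "j = Suc i"
proof -
  let ?ys = "take (Suc i) xs @ drop j xs"
  have "xs \<noteq> []"
    using assms(3) by auto
  then have "hd ?ys = hd xs" "last ?ys = last xs"
    using assms(3) by (auto simp: hd_append)
  then have "length xs \<le> length ?ys"
    using assms(1,4) unfolding shortest_walk_def by blast
  then show ?thesis
    using assms(2,3) by simp
qed

lemma shortest_walk_chordless:
  assumes "shortest_walk E A xs" "Suc i < j" "j < length xs"
  shows "\<not> E (xs!i) (xs!j)"
proof
  assume "E (xs!i) (xs!j)"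
  then have "walk E A (take (Suc i) xs @ drop j xs)"
    using assms walk_splice[of E A xs i j] unfolding shortest_walk_def by simp
  then show False
    using shortest_walk_shortcut[OF assms(1) _ assms(3), of i] assms(2) by simp
qed

lemma shortest_walk_distinct:
  assumes "shortest_walk E A xs"
  shows "distinct xs"
proof (rule ccontr)
  assume "\<not> distinct xs"
  then obtain i j where ij: "i < j" "j < length xs" "xs!i = xs!j"
    by (metis distinct_conv_nth linorder_neqE_nat)
  have "walk E A xs"
    using assms unfolding shortest_walk_def by simp
  show False
  proof (cases "Suc j < length xs")
    case True
    with \<open>walk E A xs\<close> have "E (xs!i) (xs!Suc j)"
      using ij walk_nth by fastforce
    then have "walk E A (take (Suc i) xs @ drop (Suc j) xs)"
      using \<open>walk E A xs\<close> True ij walk_splice by fastforce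
    then show False
      using shortest_walk_shortcut[OF assms _ True, of i] ij by simp
  next
    case False
    then have "j = length xs - 1" and ne: "xs \<noteq> []"
      using ij by auto
    then have "last xs = xs!i"
      using ij by (simp add: last_conv_nth)
    moreover have "walk E A (take (Suc i) xs)"
      using \<open>walk E A xs\<close> walk_take by blast
    ultimately have "length xs \<le> length (take (Suc i) xs)"
      using assms ij ne unfolding shortest_walk_def by (auto simp: last_conv_nth)
    then show False
      using ij by simp
  qed
qed

section \<open>Threshold families\<close>

definition threshold_on :: "'a set \<Rightarrow> ('a set \<Rightarrow> bool) \<Rightarrow> bool" where
  "threshold_on S Q \<longleftrightarrow> (\<exists>(w :: 'a \<Rightarrow> real) (t :: real). (\<forall>x\<in>S. w x \<ge> 0) \<and> t \<ge> 0 \<and>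
     (\<forall>T. T \<subseteq> S \<longrightarrow> ((\<Sum>x\<in>T. w x) \<ge> t \<longleftrightarrow> Q T)))"

lemma connected_domishold_iff_threshold_on:
  "connected_domishold V E \<longleftrightarrow> \<not> connected_on E V \<or> threshold_on V (connected_dominating_set V E)"
  unfolding connected_domishold_def threshold_on_def ..

lemma threshold_on_cong:
  "(\<And>T. T \<subseteq> S \<Longrightarrow> P T \<longleftrightarrow> Q T) \<Longrightarrow> threshold_on S P \<longleftrightarrow> threshold_on S Q"
  unfolding threshold_on_def by (metis (no_types, lifting))

lemma sum_indicator_eq_card:
  "finite T \<Longrightarrow> (\<Sum>x\<in>T. if x \<in> C then 1 else 0 :: real) = real (card (T \<inter> C))"
  by (simp add: sum.If_cases Int_def)

lemma threshold_on_meets: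
  assumes "finite S"
  shows "threshold_on S (\<lambda>T. T \<inter> U \<noteq> {})"
  unfolding threshold_on_def
proof (intro exI[of _ "\<lambda>x. if x \<in> U then 1 else 0"] exI[of _ 1] conjI allI impI)
  fix T
  assume "T \<subseteq> S"
  then have "finite T"
    using assms finite_subset by blast
  then show "(\<Sum>x\<in>T. if x \<in> U then 1 else 0 :: real) \<ge> 1 \<longleftrightarrow> T \<inter> U \<noteq> {}"
    by (simp add: sum_indicator_eq_card Suc_le_eq card_gt_0_iff)
qed auto

lemma threshold_on_nonempty_superset:
  assumes "finite S" "C \<subseteq> S"
  shows "threshold_on S (\<lambda>T. T \<noteq> {} \<and> C \<subseteq> T)"
proof (cases "C = {}")
  case True
  have "threshold_on S (\<lambda>T. T \<inter> S \<noteq> {})"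
    using threshold_on_meets[OF assms(1)] .
  then show ?thesis
    using True by (subst threshold_on_cong[where Q = "\<lambda>T. T \<inter> S \<noteq> {}"]) auto
next
  case False
  have "finite C"
    using assms finite_subset by blast
  show ?thesis
    unfolding threshold_on_def
  proof (intro exI[of _ "\<lambda>x. if x \<in> C then 1 else 0"] exI[of _ "real (card C)"] conjI allI impI)
    fix T
    assume "T \<subseteq> S"
    then have "finite T"
      using assms finite_subset by blast
    moreover have "card C \<le> card (T \<inter> C) \<longleftrightarrow> C \<subseteq> T"
      using card_seteq[OF \<open>finite C\<close>, of "T \<inter> C"] by (auto simp: Int_absorb1)
    ultimately show "(\<Sum>x\<in>T. if x \<in> C then 1 else 0 :: real) \<ge> real (card C) \<longleftrightarrow> T \<noteq> {} \<and> C \<subseteq> T"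
      using False by (auto simp: sum_indicator_eq_card)
  qed auto
qed

section \<open>Block graphs\<close>

definition biconnected :: "('a \<Rightarrow> 'a \<Rightarrow> bool) \<Rightarrow> 'a set \<Rightarrow> bool" where
  "biconnected E B \<longleftrightarrow> connected_on E B \<and> no_cut_vertex E B"

lemma biconnected_cycle:
  assumes "symp E" and Q: "walk E A Q" "distinct Q"
    and v: "v \<notin> set Q" "E v (hd Q)" "E v (last Q)"
  shows "biconnected E (insert v (set Q))"
proof -
  let ?B = "insert v (set Q)"
  have "connected_on E ?B"
    using walk_reaches_from_neighbour[OF Q(1) v(2)] by (auto intro!: connected_onI_root[OF assms(1)])
  moreover have "connected_on E (?B - {u})" if u: "u \<in> ?B" for u
  proof (cases "u = v")
    case True
    then have "?B - {u} = set Q"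
      using v(1) by auto
    moreover have "hd Q \<in> set Q"
      using Q(1) by (auto elim: walk.elims)
    ultimately show ?thesis
      using walk_imp_rtranclp_induced[OF Q(1)] connected_onI_root[OF assms(1)] by metis
  next
    case False
    then obtain ys zs where Q_split: "Q = ys @ u # zs"
      using u split_list by fastforce
    then have B_minus: "?B - {u} = insert v (set ys \<union> set zs)"
      using Q(2) v(1) by auto
    have reach_ys: "(induced E (?B - {u}))\<^sup>*\<^sup>* v y" if "y \<in> set ys" for y
    proof -
      have "ys \<noteq> []"
        using that by auto
      then have "walk E A ys" "hd ys = hd Q"
        using Q(1) walk_append[of ys "u # zs" E A] by (auto simp: Q_split)
      then show ?thesis
        using walk_reaches_from_neighbour[of E A ys v y] v(2) that B_minus
        by (auto intro: induced_rtranclp_mono[rotated])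
    qed
    have reach_zs: "(induced E (?B - {u}))\<^sup>*\<^sup>* v z" if "z \<in> set zs" for z
    proof -
      have "zs \<noteq> []"
        using that by auto
      then have "walk E A (rev zs)" "hd (rev zs) = last Q"
        using Q(1) walk_append[of "ys @ [u]" zs E A] walk_rev[OF assms(1)]
        by (auto simp: Q_split hd_rev)
      then show ?thesis
        using walk_reaches_from_neighbour[of E A "rev zs" v z] v(3) that B_minus
        by (auto intro: induced_rtranclp_mono[rotated])
    qed
    show ?thesis
      using reach_ys reach_zs B_minus False
      by (intro connected_onI_root[OF assms(1), of v]) auto
  qed
  ultimately show ?thesis
    unfolding biconnected_def no_cut_vertex_def by blast
qed

definition cut_vertex :: "('a \<Rightarrow> 'a \<Rightarrow> bool) \<Rightarrow> 'a set \<Rightarrow> 'a \<Rightarrow> bool" where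
  "cut_vertex E S v \<longleftrightarrow> v \<in> S \<and> S - {v} \<noteq> {} \<and> \<not> connected_on E (S - {v})"

definition biconnected_cliques :: "('a \<Rightarrow> 'a \<Rightarrow> bool) \<Rightarrow> 'a set \<Rightarrow> bool" where
  "biconnected_cliques E S \<longleftrightarrow> (\<forall>B \<subseteq> S. biconnected E B \<longrightarrow> is_clique E B)"

text \<open>If an inner vertex v of a shortest walk were no cut vertex, its two neighbours a, b on the
  walk would be joined by a path avoiding v; together with v it spans a biconnected set, hence
  a clique, so the walk would have the chord a b.\<close>
lemma shortest_walk_inner_cut_vertex:
  assumes "symp E" "irreflp E" "biconnected_cliques E S" "shortest_walk E S xs"
    and i: "0 < i" "Suc i < length xs"
  shows "cut_vertex E S (xs!i)"
proof (rule ccontr)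
  assume not_cut: "\<not> cut_vertex E S (xs!i)"
  define a where "a = xs!(i - 1)"
  define v where "v = xs!i"
  define b where "b = xs!Suc i"
  have walk: "walk E S xs"
    using assms(4) unfolding shortest_walk_def by simp
  have "set xs \<subseteq> S"
    using walk_set[OF walk] .
  then have in_S: "a \<in> S" "v \<in> S" "b \<in> S"
    using i unfolding a_def v_def b_def by auto
  have neq: "a \<noteq> v" "b \<noteq> v" "a \<noteq> b"
    using shortest_walk_distinct[OF assms(4)] i unfolding a_def v_def b_def
    by (auto simp: nth_eq_iff_index_eq)
  have av: "E a v" and vb: "E v b"
    using walk_nth[OF walk, of "i - 1"] walk_nth[OF walk, of i] i unfolding a_def v_def b_def by auto
  have "connected_on E (S - {v})"
    using not_cut in_S neq unfolding cut_vertex_def v_def by auto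
  then have "(induced E (S - {v}))\<^sup>*\<^sup>* a b"
    using in_S neq unfolding connected_on_iff by blast
  then obtain Q where Q: "shortest_walk E (S - {v}) Q" "hd Q = a" "last Q = b"
    using shortest_walk_exists in_S neq by (metis Diff_iff singletonD)
  then have walk_Q: "walk E (S - {v}) Q"
    unfolding shortest_walk_def by simp
  then have Q_in: "set Q \<subseteq> S - {v}" "a \<in> set Q" "b \<in> set Q"
    using walk_set[OF walk_Q] walk_not_Nil[OF walk_Q] Q(2,3) by auto
  have "E v (hd Q)"
    using av Q(2) assms(1) by (auto dest: sympD)
  then have "biconnected E (insert v (set Q))"
    using biconnected_cycle[OF assms(1) walk_Q shortest_walk_distinct[OF Q(1)]] Q_in(1) Q(3) vb
    by blast
  moreover have "insert v (set Q) \<subseteq> S"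
    using Q_in in_S by blast
  ultimately have "E a b"
    using assms(3) neq Q_in unfolding biconnected_cliques_def is_clique_def by blast
  moreover have "\<not> E a b"
    using shortest_walk_chordless[OF assms(4), of "i - 1" "Suc i"] i unfolding a_def v_def b_def by simp
  ultimately show False
    by contradiction
qed

lemma connected_on_dominated:
  assumes "symp E" "connected_on E T" "T \<subseteq> A" "\<forall>x\<in>A - T. \<exists>y\<in>T. E x y"
  shows "connected_on E A"
proof -
  obtain t where t: "t \<in> T"
    using assms(2) unfolding connected_on_iff by blast
  have reach_T: "(induced E A)\<^sup>*\<^sup>* t y" if "y \<in> T" for y
    using assms(2,3) t that unfolding connected_on_iff by (blast intro: induced_rtranclp_mono)
  moreover have "(induced E A)\<^sup>*\<^sup>* t x" if "x \<in> A - T" for x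
  proof -
    obtain y where "y \<in> T" "E x y"
      using assms(4) \<open>x \<in> A - T\<close> by blast
    then have "(induced E A)\<^sup>*\<^sup>* x t"
      using reach_T[of y] induced_rtranclp_sym[OF assms(1)] assms(3) that
      by (blast intro: induced_rtranclp_step)
    then show ?thesis
      by (rule induced_rtranclp_sym[OF assms(1)])
  qed
  ultimately show ?thesis
    using assms(3) t by (blast intro: connected_onI_root[OF assms(1)])
qed

lemma cut_vertex_in_connected_dominating_set:
  assumes "symp E" "connected_dominating_set S E T" "cut_vertex E S v"
  shows "v \<in> T"
proof (rule ccontr)
  assume "v \<notin> T"
  then have "connected_on E (S - {v})"
    using assms(2) connected_on_dominated[OF assms(1), of T "S - {v}"]
    unfolding connected_dominating_set_def by blast
  then show False
    using assms(3) unfolding cut_vertex_def by blast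
qed

lemma shortest_walk_within_cut_vertices:
  assumes "symp E" "irreflp E" "biconnected_cliques E S" "shortest_walk E S xs"
  shows "set xs \<subseteq> {hd xs, last xs} \<union> {v. cut_vertex E S v}"
proof
  fix z
  assume "z \<in> set xs"
  then consider "z = hd xs" | "z = last xs" | i where "0 < i" "Suc i < length xs" "z = xs!i"
    using in_set_hd_last_or_inner by metis
  then show "z \<in> {hd xs, last xs} \<union> {v. cut_vertex E S v}"
    by cases (auto simp: shortest_walk_inner_cut_vertex[OF assms])
qed

lemma connected_dominating_set_iff_cut_vertices:
  assumes "symp E" "irreflp E" "connected_on E S" "biconnected_cliques E S" "T \<subseteq> S"
  shows "connected_dominating_set S E T \<longleftrightarrow> T \<noteq> {} \<and> {v. cut_vertex E S v} \<subseteq> T"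
proof
  assume cds: "connected_dominating_set S E T"
  then have "T \<noteq> {}"
    unfolding connected_dominating_set_def connected_on_def by blast
  moreover have "{v. cut_vertex E S v} \<subseteq> T"
    using cut_vertex_in_connected_dominating_set[OF assms(1) cds] by blast
  ultimately show "T \<noteq> {} \<and> {v. cut_vertex E S v} \<subseteq> T"
    by blast
next
  assume T: "T \<noteq> {} \<and> {v. cut_vertex E S v} \<subseteq> T"
  have walk_in_T: "\<exists>xs. walk E S xs \<and> hd xs = x \<and> last xs = y \<and> set xs \<subseteq> {x, y} \<union> T"
    if xy: "x \<in> S" "y \<in> S" for x y
  proof -
    have "(induced E S)\<^sup>*\<^sup>* x y"
      using assms(3) xy unfolding connected_on_iff by blast
    then obtain xs where xs: "shortest_walk E S xs" "hd xs = x" "last xs = y"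
      by (rule shortest_walk_exists[OF _ xy(2)])
    moreover have "walk E S xs"
      using xs(1) unfolding shortest_walk_def by simp
    moreover have "set xs \<subseteq> {x, y} \<union> T"
      using shortest_walk_within_cut_vertices[OF assms(1,2,4) xs(1)] T xs(2,3) by blast
    ultimately show ?thesis
      by blast
  qed
  obtain t where t: "t \<in> T"
    using T by blast
  have "connected_on E T"
  proof (rule connected_onI_root[OF assms(1) t])
    fix y
    assume "y \<in> T"
    then obtain xs where xs: "walk E S xs" "hd xs = t" "last xs = y" "set xs \<subseteq> T"
      using walk_in_T[of t y] t assms(5) by auto
    then have "(induced E (set xs))\<^sup>*\<^sup>* t y"
      using walk_imp_rtranclp_induced[OF xs(1), of y] last_in_set[OF walk_not_Nil[OF xs(1)]] by simp
    then show "(induced E T)\<^sup>*\<^sup>* t y"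
      using induced_rtranclp_mono[OF xs(4)] by blast
  qed
  moreover have "\<exists>y\<in>T. E x y" if x: "x \<in> S - T" for x
  proof -
    have "x \<in> S" "t \<in> S" "x \<noteq> t"
      using x t assms(5) by auto
    then obtain xs where xs: "walk E S xs" "hd xs = x" "last xs = t" "set xs \<subseteq> {x, t} \<union> T"
      using walk_in_T by blast
    have "xs \<noteq> []"
      using walk_not_Nil[OF xs(1)] .
    have "Suc 0 < length xs"
    proof (rule ccontr)
      assume "\<not> Suc 0 < length xs"
      then have "xs = [x]"
        using \<open>xs \<noteq> []\<close> xs(2) by (cases xs) auto
      then show False
        using xs(3) \<open>x \<noteq> t\<close> by simp
    qed
    then have "E x (xs!1)" "xs!1 \<in> set xs"
      using walk_nth[OF xs(1), of 0] xs(2) \<open>xs \<noteq> []\<close> by (auto simp: hd_conv_nth)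
    moreover have "xs!1 \<noteq> x"
      using \<open>E x (xs!1)\<close> assms(2) by (auto simp: irreflp_def)
    ultimately show ?thesis
      using xs(4) t by blast
  qed
  ultimately show "connected_dominating_set S E T"
    unfolding connected_dominating_set_def using assms(5) by simp
qed

lemma block_graph_biconnected_cliques:
  assumes "finite V" "block_graph V E" "S \<subseteq> V"
  shows "biconnected_cliques E S"
  unfolding biconnected_cliques_def
proof (intro allI impI)
  fix B
  assume B: "B \<subseteq> S" "biconnected E B"
  define F where "F = {B'. B' \<subseteq> V \<and> biconnected E B'}"
  have "finite F"
    using assms(1) unfolding F_def by (auto intro: finite_subset[of _ "Pow V"])
  moreover have "B \<in> F"
    using B assms(3) unfolding F_def by auto
  ultimately obtain M where M: "M \<in> F" "B \<subseteq> M" and M_max: "\<forall>B'\<in>F. M \<subseteq> B' \<longrightarrow> M = B'"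
    by (meson finite_has_maximal2)
  have "is_block V E M"
    unfolding is_block_def
  proof (intro conjI allI impI)
    show "M \<subseteq> V" "connected_on E M" "no_cut_vertex E M"
      using M(1) unfolding F_def biconnected_def by auto
  next
    fix B'
    assume "M \<subset> B' \<and> B' \<subseteq> V"
    then show "\<not> (connected_on E B' \<and> no_cut_vertex E B')"
      using M_max unfolding F_def biconnected_def by blast
  qed
  then have "is_clique E M"
    using assms(2) unfolding block_graph_def by blast
  then show "is_clique E B"
    using M(2) unfolding is_clique_def by blast
qed

lemma biconnected_cliques_connected_domishold:
  assumes "finite S" "symp E" "irreflp E" "biconnected_cliques E S"
  shows "connected_domishold S E"
proof -
  have "threshold_on S (connected_dominating_set S E)" if "connected_on E S"
    using threshold_on_nonempty_superset[OF assms(1), of "{v. cut_vertex E S v}"]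
      connected_dominating_set_iff_cut_vertices[OF assms(2,3) that assms(4)]
    by (subst threshold_on_cong) (auto simp: cut_vertex_def)
  then show ?thesis
    unfolding connected_domishold_iff_threshold_on by blast
qed

section \<open>Trivially perfect graphs\<close>

definition universal_vertex :: "('a \<Rightarrow> 'a \<Rightarrow> bool) \<Rightarrow> 'a set \<Rightarrow> 'a \<Rightarrow> bool" where
  "universal_vertex E S u \<longleftrightarrow> u \<in> S \<and> (\<forall>x\<in>S. x \<noteq> u \<longrightarrow> E u x)"

definition closed_nbhd :: "('a \<Rightarrow> 'a \<Rightarrow> bool) \<Rightarrow> 'a set \<Rightarrow> 'a \<Rightarrow> 'a set" where
  "closed_nbhd E S x = {y \<in> S. y = x \<or> E x y}"

lemma connected_dominating_set_universal_vertex: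
  assumes "symp E" "T \<subseteq> S" "universal_vertex E S u" "u \<in> T"
  shows "connected_dominating_set S E T"
proof -
  have "(induced E T)\<^sup>*\<^sup>* u y" if "y \<in> T" for y
    using assms(2-4) that unfolding universal_vertex_def induced_def
    by (cases "y = u") (auto intro!: r_into_rtranclp)
  then have "connected_on E T"
    by (rule connected_onI_root[OF assms(1,4)])
  moreover have "\<exists>y\<in>T. E x y" if "x \<in> S - T" for x
    using assms(1,3,4) that unfolding universal_vertex_def by (metis DiffE sympD)
  ultimately show ?thesis
    unfolding connected_dominating_set_def using assms(2) by blast
qed

lemma trivially_perfect_subset:
  "trivially_perfect V E \<Longrightarrow> S \<subseteq> V \<Longrightarrow> trivially_perfect S E"
  unfolding trivially_perfect_def by blast

lemma trivially_perfect_no_chordless_P4: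
  assumes "symp E" "trivially_perfect S E" "a \<in> S" "b \<in> S" "c \<in> S" "d \<in> S" "distinct [a, b, c, d]"
    and "E a b" "E b c" "E c d" "\<not> E a c" "\<not> E b d"
  shows False
proof (cases "E a d")
  case True
  then have "E d a"
    using assms(1) by (blast dest: sympD)
  then show False
    using assms(2-) unfolding trivially_perfect_def by blast
next
  case False
  then show False
    using assms(2-) unfolding trivially_perfect_def by blast
qed

text \<open>A neighbour c of t outside the closed neighbourhood of a would make c t a b an induced
  P4 or C4.\<close>
lemma trivially_perfect_closed_nbhd_psubset:
  assumes "symp E" "irreflp E" "trivially_perfect S E"
    and in_S: "t \<in> S" "a \<in> S" "b \<in> S"
    and edges: "E t a" "E a b" "b \<noteq> t" "\<not> E t b"
  shows "closed_nbhd E S t \<subset> closed_nbhd E S a"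
proof -
  have "c \<in> closed_nbhd E S a" if c: "c \<in> closed_nbhd E S t" for c
  proof (rule ccontr)
    assume "c \<notin> closed_nbhd E S a"
    then have "c \<in> S" "E c t" "c \<noteq> a" "\<not> E c a"
      using c assms(1) edges(1) unfolding closed_nbhd_def by (auto dest: sympD)
    moreover have "distinct [c, t, a, b]"
      using calculation edges assms(1,2) by (auto simp: irreflp_def dest: sympD)
    ultimately show False
      using trivially_perfect_no_chordless_P4[OF assms(1,3), of c t a b] in_S edges by blast
  qed
  moreover have "b \<in> closed_nbhd E S a - closed_nbhd E S t"
    using in_S edges unfolding closed_nbhd_def by auto
  ultimately show ?thesis
    by blast
qed

text \<open>If no vertex of T adjacent to t had a neighbour outside the closed neighbourhood of t,
  the connected set T would stay inside that neighbourhood and could not dominate the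
  non-neighbours of t.\<close>
lemma connected_dominating_set_leaves_closed_nbhd:
  assumes "symp E" "connected_dominating_set S E T" "t \<in> T" "\<not> universal_vertex E S t"
  shows "\<exists>a\<in>T. E t a \<and> (\<exists>b\<in>S. E a b \<and> b \<notin> closed_nbhd E S t)"
proof (rule ccontr)
  assume stuck: "\<not> ?thesis"
  have T_sub: "T \<subseteq> S" and conn: "connected_on E T" and dom: "\<forall>x\<in>S - T. \<exists>y\<in>T. E x y"
    using assms(2) unfolding connected_dominating_set_def by auto
  have "s \<in> closed_nbhd E S t" if "(induced E T)\<^sup>*\<^sup>* t s" for s
    using that
  proof (induction rule: rtranclp_induct)
    case base
    then show ?case
      using assms(3) T_sub unfolding closed_nbhd_def by auto
  next
    case (step u s)
    then have "E u s" "u \<in> T" "s \<in> S"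
      using T_sub unfolding induced_def by auto
    show ?case
    proof (cases "u = t")
      case True
      then show ?thesis
        using \<open>E u s\<close> \<open>s \<in> S\<close> unfolding closed_nbhd_def by simp
    next
      case False
      then have "E t u"
        using step.IH unfolding closed_nbhd_def by simp
      then show ?thesis
        using stuck \<open>E u s\<close> \<open>u \<in> T\<close> \<open>s \<in> S\<close> by blast
    qed
  qed
  then have T_nbhd: "T \<subseteq> closed_nbhd E S t"
    using conn assms(3) unfolding connected_on_iff by blast
  obtain b where b: "b \<in> S" "b \<notin> closed_nbhd E S t"
    using assms(4) assms(3) T_sub unfolding universal_vertex_def closed_nbhd_def by auto
  then obtain s where "s \<in> T" "E b s"
    using dom T_nbhd by blast
  then have "s \<in> T" "E t s" "E s b"
    using T_nbhd b assms(1) unfolding closed_nbhd_def by (auto dest: sympD)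
  then show False
    using stuck b by blast
qed

lemma trivially_perfect_connected_dominating_set_universal_vertex:
  assumes "symp E" "irreflp E" "finite S" "trivially_perfect S E"
    and cds: "connected_dominating_set S E T"
  shows "\<exists>u\<in>T. universal_vertex E S u"
proof (rule ccontr)
  assume none: "\<not> ?thesis"
  have "T \<subseteq> S" "T \<noteq> {}"
    using cds unfolding connected_dominating_set_def connected_on_def by auto
  then have "finite (closed_nbhd E S ` T)" "closed_nbhd E S ` T \<noteq> {}"
    using assms(3) finite_subset by auto
  then obtain m where m: "m \<in> closed_nbhd E S ` T"
    and m_max: "\<forall>X \<in> closed_nbhd E S ` T. m \<subseteq> X \<longrightarrow> m = X"
    by (meson finite_has_maximal)
  then obtain t where t: "t \<in> T" "m = closed_nbhd E S t"
    by blast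
  obtain a b where ab: "a \<in> T" "E t a" "b \<in> S" "E a b" "b \<notin> closed_nbhd E S t"
    using connected_dominating_set_leaves_closed_nbhd[OF assms(1) cds t(1)] none t(1) by blast
  then have "b \<noteq> t" "\<not> E t b" "t \<in> S" "a \<in> S"
    using t(1) \<open>T \<subseteq> S\<close> unfolding closed_nbhd_def by auto
  then have "closed_nbhd E S t \<subset> closed_nbhd E S a"
    using trivially_perfect_closed_nbhd_psubset[OF assms(1,2,4)] ab(2-4) by simp
  moreover have "closed_nbhd E S a \<in> closed_nbhd E S ` T"
    using ab(1) by (rule imageI)
  ultimately show False
    using m_max t(2) by auto
qed

lemma trivially_perfect_connected_domishold:
  assumes "finite S" "symp E" "irreflp E" "trivially_perfect S E"
  shows "connected_domishold S E"
proof -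
  have "connected_dominating_set S E T \<longleftrightarrow> T \<inter> {u. universal_vertex E S u} \<noteq> {}"
    if "T \<subseteq> S" for T
    using trivially_perfect_connected_dominating_set_universal_vertex[OF assms(2,3,1,4)]
      connected_dominating_set_universal_vertex[OF assms(2) that] by blast
  then have "threshold_on S (connected_dominating_set S E) \<longleftrightarrow>
      threshold_on S (\<lambda>T. T \<inter> {u. universal_vertex E S u} \<noteq> {})"
    by (rule threshold_on_cong)
  then have "threshold_on S (connected_dominating_set S E)"
    using threshold_on_meets[OF assms(1)] by blast
  then show ?thesis
    unfolding connected_domishold_iff_threshold_on by blast
qed

theorem mainTheorem10:
  fixes V :: "'a set" and E :: "'a \<Rightarrow> 'a \<Rightarrow> bool"
  assumes "simple_graph V E"
  shows "(block_graph V E \<longrightarrow> hereditarily_connected_domishold V E) \<and>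
         (trivially_perfect V E \<longrightarrow> hereditarily_connected_domishold V E)"
proof -
  have V: "finite V" "symp E" "irreflp E"
    using assms unfolding simple_graph_def symp_def irreflp_def by auto
  have "connected_domishold S E" if "block_graph V E" "S \<subseteq> V" for S
    using biconnected_cliques_connected_domishold[OF finite_subset[OF that(2) V(1)] V(2,3)]
      block_graph_biconnected_cliques[OF V(1) that] by blast
  moreover have "connected_domishold S E" if "trivially_perfect V E" "S \<subseteq> V" for S
    using trivially_perfect_connected_domishold[OF finite_subset[OF that(2) V(1)] V(2,3)]
      trivially_perfect_subset[OF that] by blast
  ultimately show ?thesis
    unfolding hereditarily_connected_domishold_def by blast
qed

end
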